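(* Let $\mathcal F$ be the set of free superintegrable systems on the complex Euclidean plane, i.e. of $3$-dimensional linear subspaces $W$ of the space of Killing tensors with $g\in W$. For $W\in\mathcal F$ let $P_W:=\{L\in S^2_0:\ L-(\operatorname{tr}L)g\in W\}$. Then $W\mapsto P_W$ is a bijection from $\mathcal F$ onto the Grassmannian $G_2(S^2_0)$ of $2$-planes in the $5$-dimensional space $S^2_0$, and composing with the Plücker map $\operatorname{span}\{L^1,L^2\}\mapsto(a_{ij})\in\mathbb P^9$ identifies $\mathcal F$ with the $6$-dimensional projective variety of skew-symmetric $5\times5$ matrices $$\begin{bmatrix}0&a_{30}&a_{20}&a_{10}&a_{00}\\-a_{30}&0&a_{21}&a_{11}&a_{01}\\-a_{20}&-a_{21}&0&a_{12}&a_{02}\\-a_{10}&-a_{11}&-a_{12}&0&a_{03}\\-a_{00}&-a_{01}&-a_{02}&-a_{03}&0\end{bmatrix}$$ of rank two (up to scalar), i.e. with the subvariety of $\mathbb P^9$ defined by the Plücker relations $a_{03}a_{21}-a_{02}a_{11}+a_{01}a_{12}=0$, $a_{03}a_{20}-a_{02}a_{10}+a_{00}a_{12}=0$, $a_{03}a_{30}-a_{01}a_{10}+a_{00}a_{11}=0$, $a_{02}a_{30}-a_{01}a_{20}+a_{00}a_{21}=0$, $a_{12}a_{30}-a_{11}a_{20}+a_{10}a_{21}=0$.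
   Context: Work on the complex Euclidean plane $\mathbb C^2$ with null coordinates $(z,w)$ and the flat holomorphic metric $g$ with $g_{zz}=g_{ww}=0$, $g_{zw}=g_{wz}=1$. A Killing tensor is a symmetric tensor field $K$ with $K_{ij,k}+K_{jk,i}+K_{ki,j}=0$; a special conformal Killing tensor (SCKT) is a symmetric tensor field $L$ with $L_{ij,k}=\tfrac12(\lambda_ig_{jk}+\lambda_jg_{ik})$, $\lambda=\operatorname{tr}L=g^{ij}L_{ij}$, $\lambda_i=\partial_i\lambda$. On this plane the SCKTs are exactly the tensors with components $L_{zz}=A_{zz}+2b_zw+cw^2$, $L_{ww}=A_{ww}+2b_wz+cz^2$, $L_{zw}=A_{zw}+b_zz+b_ww+czw$ for complex constants $A_{zz},A_{zw},A_{ww},b_z,b_w,c$, and $L\mapsto L-(\operatorname{tr}L)g$ is a linear isomorphism from SCKTs onto Killing tensors sending $g$ to $-g$. Let $S^2_0$ be the $5$-dimensional space of SCKTs with $A_{zw}=0$. For $L^1,L^2\in S^2_0$ (with parameters carrying superscripts $1,2$) the Plücker coordinates of $\operatorname{span}\{L^1,L^2\}$ are $a_{30}=2(A^1_{zz}b^2_z-b^1_zA^2_{zz})$, $a_{20}=A^1_{zz}c^2-c^1A^2_{zz}$, $a_{10}=2(A^1_{zz}b^2_w-b^1_wA^2_{zz})$, $a_{00}=A^1_{zz}A^2_{ww}-A^1_{ww}A^2_{zz}$, $a_{21}=2(b^1_zc^2-c^1b^2_z)$, $a_{11}=4(b^1_zb^2_w-b^1_wb^2_z)$, $a_{01}=2(b^1_zA^2_{ww}-A^1_{ww}b^2_z)$,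 $a_{12}=2(c^1b^2_w-b^1_wc^2)$, $a_{02}=c^1A^2_{ww}-A^1_{ww}c^2$, $a_{03}=2(b^1_wA^2_{ww}-A^1_{ww}b^2_w)$, regarded as a point of $\mathbb P^9$. *)

theory Defs
  imports "HOL-Analysis.Analysis" "HOL-Library.Function_Algebras"
begin

text \<open>A symmetric tensor field is given by its three independent components
  K_zz, K_zw (= K_wz), K_ww, each a complex function of the point (z,w).\<close>

datatype idx = ZZ | ZW | WW

type_synonym tfield = "complex \<times> complex \<Rightarrow> idx \<Rightarrow> complex"

definition tsc :: "complex \<Rightarrow> tfield \<Rightarrow> tfield" where
  "tsc c K = (\<lambda>p i. c * K p i)"

interpretation tf: vector_space tsc
  by unfold_locales (auto simp: tsc_def fun_eq_iff algebra_simps)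

definition gmet :: tfield where
  "gmet = (\<lambda>p i. if i = ZW then 1 else 0)"

text \<open>Trace with respect to g: g^zw = g^wz = 1, g^zz = g^ww = 0, so tr L = L_zw + L_wz.\<close>
definition ttr :: "tfield \<Rightarrow> complex \<times> complex \<Rightarrow> complex" where
  "ttr L = (\<lambda>p. 2 * L p ZW)"

definition sckt :: "complex \<Rightarrow> complex \<Rightarrow> complex \<Rightarrow> complex \<Rightarrow> complex \<Rightarrow> complex \<Rightarrow> tfield" where
  "sckt Azz Azw Aww bz bw c = (\<lambda>(z,w) i. case i of
      ZZ \<Rightarrow> Azz + 2 * bz * w + c * w^2
    | WW \<Rightarrow> Aww + 2 * bw * z + c * z^2
    | ZW \<Rightarrow> Azw + bz * z + bw * w + c * z * w)"

definition SCKT :: "tfield set" where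
  "SCKT = {sckt Azz Azw Aww bz bw c | Azz Azw Aww bz bw c. True}"

definition kt_of :: "tfield \<Rightarrow> tfield" where
  "kt_of L = (\<lambda>p i. L p i - ttr L p * gmet p i)"

definition KT :: "tfield set" where
  "KT = kt_of ` SCKT"

definition s20 :: "complex \<times> complex \<times> complex \<times> complex \<times> complex \<Rightarrow> tfield" where
  "s20 q = (case q of (Azz, Aww, bz, bw, c) \<Rightarrow> sckt Azz 0 Aww bz bw c)"

definition S20 :: "tfield set" where
  "S20 = range s20"

definition FSI :: "tfield set set" where
  "FSI = {W. W \<subseteq> KT \<and> tf.subspace W \<and> tf.dim W = 3 \<and> gmet \<in> W}"

definition PW :: "tfield set \<Rightarrow> tfield set" where
  "PW W = {L \<in> S20. kt_of L \<in> W}"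

definition G2S20 :: "tfield set set" where
  "G2S20 = {P. P \<subseteq> S20 \<and> tf.subspace P \<and> tf.dim P = 2}"

definition is_basis2 :: "tfield set \<Rightarrow> _ \<Rightarrow> _ \<Rightarrow> bool" where
  "is_basis2 P q1 q2 \<longleftrightarrow> s20 q1 \<noteq> s20 q2 \<and> tf.independent {s20 q1, s20 q2}
      \<and> tf.span {s20 q1, s20 q2} = P"

datatype pidx = a30 | a20 | a10 | a00 | a21 | a11 | a01 | a12 | a02 | a03

definition plk :: "complex \<times> complex \<times> complex \<times> complex \<times> complex
   \<Rightarrow> complex \<times> complex \<times> complex \<times> complex \<times> complex \<Rightarrow> pidx \<Rightarrow> complex" where
  "plk q1 q2 = (case q1 of (Azz1, Aww1, bz1, bw1, c1) \<Rightarrow> case q2 of (Azz2, Aww2, bz2, bw2, c2) \<Rightarrow>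
     (\<lambda>k. case k of
        a30 \<Rightarrow> 2 * (Azz1 * bz2 - bz1 * Azz2)
      | a20 \<Rightarrow> Azz1 * c2 - c1 * Azz2
      | a10 \<Rightarrow> 2 * (Azz1 * bw2 - bw1 * Azz2)
      | a00 \<Rightarrow> Azz1 * Aww2 - Aww1 * Azz2
      | a21 \<Rightarrow> 2 * (bz1 * c2 - c1 * bz2)
      | a11 \<Rightarrow> 4 * (bz1 * bw2 - bw1 * bz2)
      | a01 \<Rightarrow> 2 * (bz1 * Aww2 - Aww1 * bz2)
      | a12 \<Rightarrow> 2 * (c1 * bw2 - bw1 * c2)
      | a02 \<Rightarrow> c1 * Aww2 - Aww1 * c2
      | a03 \<Rightarrow> 2 * (bw1 * Aww2 - Aww1 * bw2)))"

definition proportional :: "(pidx \<Rightarrow> complex) \<Rightarrow> (pidx \<Rightarrow> complex) \<Rightarrow> bool" where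
  "proportional a b \<longleftrightarrow> (\<exists>c. c \<noteq> 0 \<and> a = (\<lambda>k. c * b k))"

text \<open>Affine cone (minus 0) over the subvariety of P^9 cut out by the Pluecker relations.\<close>
definition plucker_var :: "(pidx \<Rightarrow> complex) set" where
  "plucker_var = {a. a \<noteq> 0
     \<and> a a03 * a a21 - a a02 * a a11 + a a01 * a a12 = 0
     \<and> a a03 * a a20 - a a02 * a a10 + a a00 * a a12 = 0
     \<and> a a03 * a a30 - a a01 * a a10 + a a00 * a a11 = 0
     \<and> a a02 * a a30 - a a01 * a a20 + a a00 * a a21 = 0
     \<and> a a12 * a a30 - a a11 * a a20 + a a10 * a a21 = 0}"

definition ix5 :: "5 \<Rightarrow> nat" where
  "ix5 i = nat (Rep_bit1 i)"

definition skewmat :: "(pidx \<Rightarrow> complex) \<Rightarrow> complex^5^5" where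
  "skewmat a = (\<chi> i j.
     [[0, a a30, a a20, a a10, a a00],
      [- a a30, 0, a a21, a a11, a a01],
      [- a a20, - a a21, 0, a a12, a a02],
      [- a a10, - a a11, - a a12, 0, a a03],
      [- a a00, - a a01, - a a02, - a a03, 0]] ! ix5 i ! ix5 j)"

end

theory Submission
  imports Defs
begin

text \<open>Every special conformal Killing tensor is uniquely L + t g with L in S^2_0, so every Killing
  tensor is uniquely t g + (L - (tr L) g). Hence a 3-space W of Killing tensors containing g is
  spanned by g and L1 - (tr L1) g, L2 - (tr L2) g for a plane P_W = span {L1, L2} in S^2_0, and P_W
  determines W. In the coordinates (A_zz, 2b_z, c, 2b_w, A_ww) of S^2_0 the Pluecker coordinates of P_W
  are the 2x2 minors of the coordinate vectors of L1 and L2, so the remaining claims are the classical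
  description of decomposable bivectors u \<and> v in \<Lambda>^2 C^5: their coordinates satisfy the Pluecker
  relations; conversely, if a_ij \<noteq> 0 the relations say that every row of the skew matrix of a is a
  combination of rows i and j, which makes a = u \<and> v and the matrix of rank two.\<close>

context vector_space
begin

lemma span_pair: "span {x, y} = {scale a x + scale b y | a b. True}"
proof (auto simp: span_insert span_singleton)
  fix v a b assume "v - scale a x = scale b y"
  then show "\<exists>a b. v = scale a x + scale b y" by (metis diff_eq_eq add.commute)
next
  fix a b show "\<exists>a' b'. scale a x + scale b y - scale a' x = scale b' y"
    by (intro exI[of _ a] exI[of _ b]) simp
qed

lemma span_triple: "span {x, y, z} = {scale a x + scale b y + scale c z | a b c. True}"
proof -
  have "v - scale a x \<in> span {y, z} \<longleftrightarrow> (\<exists>b c. v = scale a x + scale b y + scale c z)" for v a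
    unfolding span_pair by (auto simp: algebra_simps)
  then show ?thesis by (auto simp: span_insert[of x])
qed

lemma independent_pair_iff:
  "independent {x, y} \<and> x \<noteq> y \<longleftrightarrow> (\<forall>a b. scale a x + scale b y = 0 \<longrightarrow> a = 0 \<and> b = 0)"
proof (intro iffI allI impI)
  fix a b assume indep: "independent {x, y} \<and> x \<noteq> y" and "scale a x + scale b y = 0"
  then have "(\<Sum>v\<in>{x, y}. scale (if v = x then a else b) v) = 0" by auto
  from independentD[OF indep[THEN conjunct1] _ order_refl this] indep
  show "a = 0 \<and> b = 0" by (metis insertI1 insertI2 finite.emptyI finite.insertI)
next
  assume triv: "\<forall>a b. scale a x + scale b y = 0 \<longrightarrow> a = 0 \<and> b = 0"
  have "scale 1 x + scale (-1) x = 0" by simp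
  with triv have "x \<noteq> y" by fastforce
  moreover from this have "independent {x, y}"
    by (intro independent_if_scalars_zero) (use triv in auto)
  ultimately show "independent {x, y} \<and> x \<noteq> y" by blast
qed

lemma independent_triple_iff:
  "independent {x, y, z} \<and> x \<noteq> y \<and> x \<noteq> z \<and> y \<noteq> z \<longleftrightarrow>
    (\<forall>a b c. scale a x + scale b y + scale c z = 0 \<longrightarrow> a = 0 \<and> b = 0 \<and> c = 0)"
proof (intro iffI allI impI)
  fix a b c
  assume indep: "independent {x, y, z} \<and> x \<noteq> y \<and> x \<noteq> z \<and> y \<noteq> z"
    and "scale a x + scale b y + scale c z = 0"
  then have "(\<Sum>v\<in>{x, y, z}. scale (if v = x then a else if v = y then b else c) v) = 0"
    by (auto simp: add.assoc)
  from independentD[OF indep[THEN conjunct1] _ order_refl this] indep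
  show "a = 0 \<and> b = 0 \<and> c = 0" by (metis insertI1 insertI2 finite.emptyI finite.insertI)
next
  assume triv: "\<forall>a b c. scale a x + scale b y + scale c z = 0 \<longrightarrow> a = 0 \<and> b = 0 \<and> c = 0"
  have "scale 1 x + scale (-1) x + scale 0 z = 0" "scale 1 x + scale 0 y + scale (-1) x = 0"
    "scale 0 x + scale 1 y + scale (-1) y = 0"
    by simp_all
  with triv have distinct: "x \<noteq> y" "x \<noteq> z" "y \<noteq> z" by fastforce+
  moreover have "independent {x, y, z}"
    by (intro independent_if_scalars_zero) (use triv distinct in \<open>auto simp: add.assoc\<close>)
  ultimately show "independent {x, y, z} \<and> x \<noteq> y \<and> x \<noteq> z \<and> y \<noteq> z" by blast
qed

lemma span_triple_shift: "span {g, scale s g + x, scale t g + y} = span {g, x, y}"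
proof -
  have "scale s g + x - scale s g \<in> span {g, scale s g + x, scale t g + y}"
    "scale t g + y - scale t g \<in> span {g, scale s g + x, scale t g + y}"
    by (intro span_diff span_scale span_base; simp)+
  then have "{g, x, y} \<subseteq> span {g, scale s g + x, scale t g + y}" by (simp add: span_base)
  moreover have "{g, scale s g + x, scale t g + y} \<subseteq> span {g, x, y}"
    by (simp add: span_base span_add span_scale)
  ultimately show ?thesis by (simp add: span_eq)
qed

lemma dim2_basis:
  assumes "subspace P" "dim P = 2"
  obtains x y where "independent {x, y}" "x \<noteq> y" "span {x, y} = P"
proof -
  obtain B where B: "B \<subseteq> P" "independent B" "P \<subseteq> span B" "card B = dim P"
    by (rule basis_exists)
  then obtain x y where "B = {x, y}" "x \<noteq> y" using assms(2) by (auto simp: card_2_iff)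
  moreover have "span B = P" using span_subspace[OF B(1,3) assms(1)] .
  ultimately show thesis using that B(2) by simp
qed

lemma dim3_basis_extending:
  assumes "subspace W" "dim W = 3" "g \<in> W" "g \<noteq> 0"
  obtains x y where "independent {g, x, y}" "g \<noteq> x" "g \<noteq> y" "x \<noteq> y" "span {g, x, y} = W"
proof -
  have "independent {g}" using assms(4) by simp
  then obtain B where B: "{g} \<subseteq> B" "B \<subseteq> W" "independent B" "W \<subseteq> span B"
    using maximal_independent_subset_extend[of "{g}" W] assms(3) by blast
  have "card B = 3" using basis_card_eq_dim[OF B(2,4,3)] assms(2) by simp
  then have "card (B - {g}) = 2" using B(1) by (simp add: card_Diff_singleton_if)
  then obtain x y where xy: "B - {g} = {x, y}" "x \<noteq> y" by (auto simp: card_2_iff)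
  then have "B = {g, x, y}" "g \<noteq> x" "g \<noteq> y" using B(1) by blast+
  moreover have "span B = W" using span_subspace[OF B(2,4) assms(1)] .
  ultimately show thesis using that B(3) xy(2) by simp
qed

end

definition minor2 :: "(nat \<Rightarrow> 'a::comm_ring) \<Rightarrow> (nat \<Rightarrow> 'a) \<Rightarrow> nat \<Rightarrow> nat \<Rightarrow> 'a" where
  "minor2 u v i j = u i * v j - u j * v i"

lemma minor2_swap: "minor2 u v j i = - minor2 u v i j"
  by (simp add: minor2_def)

lemma minor2_diag [simp]: "minor2 u v i i = 0"
  by (simp add: minor2_def)

lemma minor2_lincomb:
  "minor2 (\<lambda>k. \<alpha> * u k + \<beta> * v k) (\<lambda>k. \<gamma> * u k + \<delta> * v k) i j = (\<alpha> * \<delta> - \<beta> * \<gamma>) * minor2 u v i j"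
  by (simp add: minor2_def algebra_simps)

lemma minor2_expansion:
  "u k * minor2 u v i j - u j * minor2 u v i k + u i * minor2 u v j k = 0"
  "v k * minor2 u v i j - v j * minor2 u v i k + v i * minor2 u v j k = 0"
  by (simp_all add: minor2_def algebra_simps)

lemma lincomb_trivial_if_minor2_nonzero:
  fixes u v :: "nat \<Rightarrow> 'a::idom"
  assumes "minor2 u v i j \<noteq> 0" "\<alpha> * u i + \<beta> * v i = 0" "\<alpha> * u j + \<beta> * v j = 0"
  shows "\<alpha> = 0 \<and> \<beta> = 0"
proof -
  have "\<alpha> * minor2 u v i j = 0" "\<beta> * minor2 u v i j = 0"
    using assms(2,3) unfolding minor2_def by algebra+
  then show ?thesis using assms(1) by simp
qed

lemma lincomb_nontrivial_if_minor2_vanish: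
  fixes u v :: "nat \<Rightarrow> 'a::comm_ring_1"
  assumes "\<And>i j. i \<in> K \<Longrightarrow> j \<in> K \<Longrightarrow> minor2 u v i j = 0"
  shows "\<exists>\<alpha> \<beta>. (\<alpha> \<noteq> 0 \<or> \<beta> \<noteq> 0) \<and> (\<forall>k\<in>K. \<alpha> * u k + \<beta> * v k = 0)"
proof (cases "\<forall>k\<in>K. u k = 0")
  case True
  then show ?thesis by (intro exI[of _ 1] exI[of _ 0]) simp
next
  case False
  then obtain i where "i \<in> K" "u i \<noteq> 0" by blast
  then show ?thesis using assms[of i]
    by (intro exI[of _ "v i"] exI[of _ "- u i"]) (auto simp: minor2_def algebra_simps)
qed

text \<open>The hypothesis says that the 3x3 minors of (x, u, v) through the rows i, j vanish; the
  coefficients are then given by Cramer's rule.\<close>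
lemma lincomb_if_minor2_expansion:
  fixes u v x :: "nat \<Rightarrow> 'a::field"
  assumes "minor2 u v i j \<noteq> 0"
    and "\<And>k. k \<in> K \<Longrightarrow> x k * minor2 u v i j - x j * minor2 u v i k + x i * minor2 u v j k = 0"
  shows "\<exists>\<alpha> \<beta>. \<forall>k\<in>K. x k = \<alpha> * u k + \<beta> * v k"
proof (intro exI ballI)
  fix k assume "k \<in> K"
  then have "x k * minor2 u v i j = (x i * v j - x j * v i) * u k + (u i * x j - u j * x i) * v k"
    using assms(2)[OF \<open>k \<in> K\<close>] unfolding minor2_def by algebra
  then have "x k = ((x i * v j - x j * v i) * u k + (u i * x j - u j * x i) * v k) / minor2 u v i j"
    using assms(1) by (simp add: eq_divide_eq)
  then show "x k = (x i * v j - x j * v i) / minor2 u v i j * u k + (u i * x j - u j * x i) / minor2 u v i j * v k"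
    by (simp add: add_divide_distrib)
qed

definition skew_pos :: "pidx \<Rightarrow> nat \<times> nat" where
  "skew_pos x = (case x of a30 \<Rightarrow> (0, 1) | a20 \<Rightarrow> (0, 2) | a10 \<Rightarrow> (0, 3) | a00 \<Rightarrow> (0, 4)
     | a21 \<Rightarrow> (1, 2) | a11 \<Rightarrow> (1, 3) | a01 \<Rightarrow> (1, 4) | a12 \<Rightarrow> (2, 3) | a02 \<Rightarrow> (2, 4) | a03 \<Rightarrow> (3, 4))"

definition wedge :: "(nat \<Rightarrow> 'a::comm_ring) \<Rightarrow> (nat \<Rightarrow> 'a) \<Rightarrow> pidx \<Rightarrow> 'a" where
  "wedge u v x = minor2 u v (fst (skew_pos x)) (snd (skew_pos x))"

lemma skew_pos_less: "fst (skew_pos x) < 5" "snd (skew_pos x) < 5"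
  by (cases x; simp add: skew_pos_def)+

lemma index_pair_cases:
  assumes "\<And>x. P (fst (skew_pos x)) (snd (skew_pos x))" "\<And>i j. P i j \<Longrightarrow> P j i" "\<And>i. P i i"
    and "i < 5" "j < 5"
  shows "P i j"
proof -
  have "P 0 1" "P 0 2" "P 0 3" "P 0 4" "P 1 2" "P 1 3" "P 1 4" "P 2 3" "P 2 4" "P 3 4"
    using assms(1)[of a30] assms(1)[of a20] assms(1)[of a10] assms(1)[of a00] assms(1)[of a21]
      assms(1)[of a11] assms(1)[of a01] assms(1)[of a12] assms(1)[of a02] assms(1)[of a03]
    by (simp_all add: skew_pos_def)
  moreover have "i = 0 \<or> i = 1 \<or> i = 2 \<or> i = 3 \<or> i = 4" "j = 0 \<or> j = 1 \<or> j = 2 \<or> j = 3 \<or> j = 4"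
    using assms(4,5) by auto
  ultimately show ?thesis using assms(2,3) by (elim disjE) metis+
qed

lemma minor2_if_wedge_proportional:
  assumes "wedge u v = (\<lambda>x. c * wedge u' v' x)" "i < 5" "j < 5"
  shows "minor2 u v i j = c * minor2 u' v' i j"
  using assms(2,3)
proof (rule index_pair_cases[rotated 3])
  show "minor2 u v (fst (skew_pos x)) (snd (skew_pos x)) = c * minor2 u' v' (fst (skew_pos x)) (snd (skew_pos x))" for x
    using fun_cong[OF assms(1), of x] by (simp add: wedge_def)
next
  show "minor2 u v j i = c * minor2 u' v' j i" if "minor2 u v i j = c * minor2 u' v' i j" for i j
    using that minor2_swap[of u v] minor2_swap[of u' v'] by (metis mult_minus_right)
qed simp

lemma minor2_nonzero_if_wedge_nonzero:
  assumes "wedge u v \<noteq> 0"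
  obtains i j where "i < 5" "j < 5" "minor2 u v i j \<noteq> 0"
proof -
  obtain x where "wedge u v x \<noteq> 0" using assms by (auto simp: fun_eq_iff)
  then show thesis using that skew_pos_less[of x] by (simp add: wedge_def)
qed

type_synonym s20_param = "complex \<times> complex \<times> complex \<times> complex \<times> complex"

text \<open>The coordinate order (A_zz, 2b_z, c, 2b_w, A_ww) is the row order of the skew matrix, so that the
  Pluecker coordinates are exactly the 2x2 minors of two coordinate vectors.\<close>
definition s20_coords :: "s20_param \<Rightarrow> nat \<Rightarrow> complex" where
  "s20_coords q k = (case q of (Azz, Aww, bz, bw, c) \<Rightarrow>
     if k = 0 then Azz else if k = 1 then 2 * bz else if k = 2 then c else if k = 3 then 2 * bw else Aww)"

definition s20_of_coords :: "(nat \<Rightarrow> complex) \<Rightarrow> s20_param" where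
  "s20_of_coords u = (u 0, u 4, u 1 / 2, u 3 / 2, u 2)"

lemma less_5_cases: "(k::nat) < 5 \<longleftrightarrow> k = 0 \<or> k = 1 \<or> k = 2 \<or> k = 3 \<or> k = 4"
  by auto

lemma s20_coords_of_coords: "k < 5 \<Longrightarrow> s20_coords (s20_of_coords u) k = u k"
  by (auto simp: less_5_cases s20_coords_def s20_of_coords_def)

lemma s20_of_coords_coords [simp]: "s20_of_coords (s20_coords q) = q"
  by (cases q) (simp add: s20_coords_def s20_of_coords_def)

lemma plk_eq_wedge: "plk q1 q2 = wedge (s20_coords q1) (s20_coords q2)"
  by (cases q1; cases q2; rule ext; case_tac x)
    (simp_all add: plk_def wedge_def minor2_def skew_pos_def s20_coords_def algebra_simps)

lemma plk_s20_of_coords: "plk (s20_of_coords u) (s20_of_coords v) = wedge u v"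
  by (rule ext) (simp add: plk_eq_wedge wedge_def minor2_def s20_coords_of_coords skew_pos_less)

definition s20_lincomb :: "complex \<Rightarrow> s20_param \<Rightarrow> complex \<Rightarrow> s20_param \<Rightarrow> s20_param" where
  "s20_lincomb \<alpha> q1 \<beta> q2 = s20_of_coords (\<lambda>k. \<alpha> * s20_coords q1 k + \<beta> * s20_coords q2 k)"

lemma plk_s20_lincomb:
  "plk (s20_lincomb \<alpha> q1 \<beta> q2) (s20_lincomb \<gamma> q1 \<delta> q2) = (\<lambda>x. (\<alpha> * \<delta> - \<beta> * \<gamma>) * plk q1 q2 x)"
  unfolding s20_lincomb_def plk_s20_of_coords by (simp add: plk_eq_wedge wedge_def minor2_lincomb fun_eq_iff)

lemma tsc_apply [simp]: "tsc c K p i = c * K p i"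
  by (simp add: tsc_def)

lemma gmet_apply: "gmet p i = (if i = ZW then 1 else 0)"
  by (simp add: gmet_def)

lemma gmet_nonzero: "gmet \<noteq> 0"
  by (auto simp: fun_eq_iff gmet_apply)

lemma kt_of_apply: "kt_of L p i = (if i = ZW then - L p ZW else L p i)"
  by (auto simp: kt_of_def ttr_def gmet_def)

lemma s20_apply: "s20 (Azz, Aww, bz, bw, c) (z, w) i = (case i of
      ZZ \<Rightarrow> Azz + 2 * bz * w + c * w\<^sup>2 | WW \<Rightarrow> Aww + 2 * bw * z + c * z\<^sup>2 | ZW \<Rightarrow> bz * z + bw * w + c * z * w)"
  by (simp add: s20_def sckt_def)

lemma s20_s20_lincomb: "s20 (s20_lincomb \<alpha> q1 \<beta> q2) = tsc \<alpha> (s20 q1) + tsc \<beta> (s20 q2)"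
  by (cases q1; cases q2)
    (auto simp: fun_eq_iff s20_lincomb_def s20_of_coords_def s20_coords_def s20_apply field_simps
      split: idx.split)

lemma kt_of_s20_lincomb:
  "kt_of (s20 (s20_lincomb \<alpha> q1 \<beta> q2)) = tsc \<alpha> (kt_of (s20 q1)) + tsc \<beta> (kt_of (s20 q2))"
  by (auto simp: s20_s20_lincomb fun_eq_iff kt_of_apply)

text \<open>Evaluating at the points (0,0), (0,1), (0,-1) and (1,0) recovers all six parameters.\<close>
lemma gmet_plus_kt_of_s20_inj:
  assumes "tsc t gmet + kt_of (s20 q) = tsc t' gmet + kt_of (s20 q')"
  shows "t = t' \<and> q = q'"
proof -
  obtain a b c d e where q: "q = (a, b, c, d, e)" by (cases q)
  obtain a' b' c' d' e' where q': "q' = (a', b', c', d', e')" by (cases q')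
  have E: "t * gmet p i + kt_of (s20 q) p i = t' * gmet p i + kt_of (s20 q') p i" for p i
    using fun_cong[OF fun_cong[OF assms, of p], of i] by simp
  note at = E[unfolded q q' kt_of_apply gmet_apply]
  have "a = a'" "b = b'" "t = t'"
    using at[where p = "(0, 0)" and i = ZZ] at[where p = "(0, 0)" and i = WW]
      at[where p = "(0, 0)" and i = ZW]
    by (simp_all add: s20_apply)
  moreover have h1: "a + 2 * c + e = a' + 2 * c' + e'" and h2: "a - 2 * c + e = a' - 2 * c' + e'"
    and h3: "b + 2 * d + e = b' + 2 * d' + e'"
    using at[where p = "(0, 1)" and i = ZZ] at[where p = "(0, -1)" and i = ZZ]
      at[where p = "(1, 0)" and i = WW]
    by (simp_all add: s20_apply)
  moreover have "c = c'"
  proof -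
    have "4 * c = 4 * c'" using h1 h2 by algebra
    then show ?thesis by simp
  qed
  ultimately show ?thesis unfolding q q' by simp
qed

lemma s20_eq_iff: "s20 q = s20 q' \<longleftrightarrow> q = q'"
proof
  assume "s20 q = s20 q'"
  then show "q = q'" using gmet_plus_kt_of_s20_inj[of 0 q 0 q'] by simp
qed simp

lemma s20_of_coords_zero: "s20_of_coords (\<lambda>k. 0) = (0, 0, 0, 0, 0)"
  by (simp add: s20_of_coords_def)

lemma s20_zero: "s20 (0, 0, 0, 0, 0) = 0"
  by (auto simp: fun_eq_iff s20_apply split: idx.split)

lemma s20_eq_0_iff: "s20 q = 0 \<longleftrightarrow> q = (0, 0, 0, 0, 0)"
  using s20_eq_iff[of q "(0, 0, 0, 0, 0)"] by (simp add: s20_zero)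

lemma s20_of_coords_eq_iff: "s20_of_coords u = s20_of_coords v \<longleftrightarrow> (\<forall>k<5. u k = v k)"
  unfolding s20_of_coords_def by (auto simp: less_5_cases)

lemma s20_lincomb_eq_0_iff:
  "tsc \<alpha> (s20 q1) + tsc \<beta> (s20 q2) = 0 \<longleftrightarrow> (\<forall>k<5. \<alpha> * s20_coords q1 k + \<beta> * s20_coords q2 k = 0)"
proof -
  have "tsc \<alpha> (s20 q1) + tsc \<beta> (s20 q2) = 0 \<longleftrightarrow>
      s20 (s20_lincomb \<alpha> q1 \<beta> q2) = s20 (s20_of_coords (\<lambda>k. 0))"
    by (simp add: s20_s20_lincomb s20_of_coords_zero s20_zero)
  also have "\<dots> \<longleftrightarrow> s20_lincomb \<alpha> q1 \<beta> q2 = s20_of_coords (\<lambda>k. 0)"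
    by (rule s20_eq_iff)
  also have "\<dots> \<longleftrightarrow> (\<forall>k<5. \<alpha> * s20_coords q1 k + \<beta> * s20_coords q2 k = 0)"
    by (simp add: s20_lincomb_def s20_of_coords_eq_iff)
  finally show ?thesis .
qed

lemma gmet_kt_of_lincomb_eq_0_iff:
  "tsc \<gamma> gmet + tsc \<alpha> (kt_of (s20 q1)) + tsc \<beta> (kt_of (s20 q2)) = 0 \<longleftrightarrow>
     \<gamma> = 0 \<and> tsc \<alpha> (s20 q1) + tsc \<beta> (s20 q2) = 0"
proof -
  have "tsc \<gamma> gmet + tsc \<alpha> (kt_of (s20 q1)) + tsc \<beta> (kt_of (s20 q2)) = 0 \<longleftrightarrow>
      tsc \<gamma> gmet + kt_of (s20 (s20_lincomb \<alpha> q1 \<beta> q2)) = tsc 0 gmet + kt_of (s20 (0, 0, 0, 0, 0))"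
    by (simp add: kt_of_s20_lincomb add.assoc s20_zero fun_eq_iff kt_of_apply)
  also have "\<dots> \<longleftrightarrow> \<gamma> = 0 \<and> s20_lincomb \<alpha> q1 \<beta> q2 = (0, 0, 0, 0, 0)"
  proof
    assume "tsc \<gamma> gmet + kt_of (s20 (s20_lincomb \<alpha> q1 \<beta> q2)) = tsc 0 gmet + kt_of (s20 (0, 0, 0, 0, 0))"
    from gmet_plus_kt_of_s20_inj[OF this] show "\<gamma> = 0 \<and> s20_lincomb \<alpha> q1 \<beta> q2 = (0, 0, 0, 0, 0)" .
  qed simp
  also have "\<dots> \<longleftrightarrow> \<gamma> = 0 \<and> tsc \<alpha> (s20 q1) + tsc \<beta> (s20 q2) = 0"
    by (simp add: s20_s20_lincomb[symmetric] s20_eq_0_iff)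
  finally show ?thesis .
qed

lemma kt_of_sckt:
  "kt_of (sckt Azz Azw Aww bz bw c) = tsc (- Azw) gmet + kt_of (s20 (Azz, Aww, bz, bw, c))"
  by (auto simp: fun_eq_iff kt_of_apply gmet_apply s20_def sckt_def split: idx.split)

lemma mem_KT_iff: "K \<in> KT \<longleftrightarrow> (\<exists>t q. K = tsc t gmet + kt_of (s20 q))"
proof
  assume "K \<in> KT"
  then obtain Azz Azw Aww bz bw c where "K = kt_of (sckt Azz Azw Aww bz bw c)"
    by (auto simp: KT_def SCKT_def)
  then have "K = tsc (- Azw) gmet + kt_of (s20 (Azz, Aww, bz, bw, c))" by (simp only: kt_of_sckt)
  then show "\<exists>t q. K = tsc t gmet + kt_of (s20 q)" by blast
next
  assume "\<exists>t q. K = tsc t gmet + kt_of (s20 q)"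
  then obtain t Azz Aww bz bw c where "K = tsc t gmet + kt_of (s20 (Azz, Aww, bz, bw, c))" by auto
  then have "K = kt_of (sckt Azz (- t) Aww bz bw c)" by (simp add: kt_of_sckt)
  then show "K \<in> KT" unfolding KT_def SCKT_def by blast
qed

lemma plk_nonzero_iff:
  "plk q1 q2 \<noteq> 0 \<longleftrightarrow> (\<forall>\<alpha> \<beta>. tsc \<alpha> (s20 q1) + tsc \<beta> (s20 q2) = 0 \<longrightarrow> \<alpha> = 0 \<and> \<beta> = 0)"
proof
  assume "plk q1 q2 \<noteq> 0"
  then obtain i j where "i < 5" "j < 5" "minor2 (s20_coords q1) (s20_coords q2) i j \<noteq> 0"
    unfolding plk_eq_wedge by (rule minor2_nonzero_if_wedge_nonzero)
  note pivot = this
  show "\<forall>\<alpha> \<beta>. tsc \<alpha> (s20 q1) + tsc \<beta> (s20 q2) = 0 \<longrightarrow> \<alpha> = 0 \<and> \<beta> = 0"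
  proof (intro allI impI)
    fix \<alpha> \<beta> assume "tsc \<alpha> (s20 q1) + tsc \<beta> (s20 q2) = 0"
    then have "\<alpha> * s20_coords q1 i + \<beta> * s20_coords q2 i = 0" "\<alpha> * s20_coords q1 j + \<beta> * s20_coords q2 j = 0"
      using pivot by (simp_all add: s20_lincomb_eq_0_iff)
    then show "\<alpha> = 0 \<and> \<beta> = 0" by (rule lincomb_trivial_if_minor2_nonzero[OF pivot(3)])
  qed
next
  assume trivial: "\<forall>\<alpha> \<beta>. tsc \<alpha> (s20 q1) + tsc \<beta> (s20 q2) = 0 \<longrightarrow> \<alpha> = 0 \<and> \<beta> = 0"
  show "plk q1 q2 \<noteq> 0"
  proof
    assume "plk q1 q2 = 0"
    then have zero_wedge:
      "wedge (s20_coords q1) (s20_coords q2) = (\<lambda>x. 0 * wedge (s20_coords q1) (s20_coords q2) x)"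
      by (simp add: plk_eq_wedge fun_eq_iff)
    have "minor2 (s20_coords q1) (s20_coords q2) i j = 0" if "i \<in> {..<5}" "j \<in> {..<5}" for i j
      using minor2_if_wedge_proportional[OF zero_wedge] that by simp
    from lincomb_nontrivial_if_minor2_vanish[OF this] obtain \<alpha> \<beta>
      where nontrivial: "\<alpha> \<noteq> 0 \<or> \<beta> \<noteq> 0"
        and "\<forall>k\<in>{..<5}. \<alpha> * s20_coords q1 k + \<beta> * s20_coords q2 k = 0"
      by blast
    then have "tsc \<alpha> (s20 q1) + tsc \<beta> (s20 q2) = 0" by (simp add: s20_lincomb_eq_0_iff)
    from trivial[rule_format, OF this] nontrivial show False by simp
  qed
qed

definition plane_of :: "s20_param \<Rightarrow> s20_param \<Rightarrow> tfield set" where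
  "plane_of q1 q2 = tf.span {s20 q1, s20 q2}"

definition system_of :: "s20_param \<Rightarrow> s20_param \<Rightarrow> tfield set" where
  "system_of q1 q2 = tf.span {gmet, kt_of (s20 q1), kt_of (s20 q2)}"

lemma plane_of_eq: "plane_of q1 q2 = {s20 (s20_lincomb \<alpha> q1 \<beta> q2) | \<alpha> \<beta>. True}"
  by (simp add: plane_of_def tf.span_pair s20_s20_lincomb)

lemma system_of_eq:
  "system_of q1 q2 = {tsc \<gamma> gmet + kt_of (s20 (s20_lincomb \<alpha> q1 \<beta> q2)) | \<gamma> \<alpha> \<beta>. True}"
  by (simp add: system_of_def tf.span_triple kt_of_s20_lincomb add.assoc)

lemma mem_plane_of_iff: "s20 r \<in> plane_of q1 q2 \<longleftrightarrow> (\<exists>\<alpha> \<beta>. r = s20_lincomb \<alpha> q1 \<beta> q2)"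
  by (auto simp: plane_of_eq s20_eq_iff)

lemma kt_of_s20_lincomb_mem_system_of: "kt_of (s20 (s20_lincomb \<alpha> q1 \<beta> q2)) \<in> system_of q1 q2"
proof -
  have "kt_of (s20 (s20_lincomb \<alpha> q1 \<beta> q2)) = tsc 0 gmet + kt_of (s20 (s20_lincomb \<alpha> q1 \<beta> q2))"
    by (simp add: fun_eq_iff)
  then show ?thesis unfolding system_of_eq by blast
qed

lemma is_basis2_iff: "is_basis2 P q1 q2 \<longleftrightarrow> plk q1 q2 \<noteq> 0 \<and> P = plane_of q1 q2"
  unfolding is_basis2_def plk_nonzero_iff plane_of_def tf.independent_pair_iff[symmetric] by blast

lemma plane_of_mem_G2S20: "plk q1 q2 \<noteq> 0 \<Longrightarrow> plane_of q1 q2 \<in> G2S20"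
proof -
  assume "plk q1 q2 \<noteq> 0"
  then have "tf.independent {s20 q1, s20 q2}" "s20 q1 \<noteq> s20 q2"
    unfolding plk_nonzero_iff tf.independent_pair_iff[symmetric] by simp_all
  then have "tf.dim (plane_of q1 q2) = 2"
    by (simp add: plane_of_def tf.dim_eq_card_independent)
  moreover have "plane_of q1 q2 \<subseteq> S20" by (auto simp: plane_of_eq S20_def)
  ultimately show ?thesis by (simp add: G2S20_def plane_of_def tf.subspace_span)
qed

lemma G2S20_obtain_plane_of:
  assumes "P \<in> G2S20"
  obtains q1 q2 where "plk q1 q2 \<noteq> 0" "P = plane_of q1 q2"
proof -
  have P: "P \<subseteq> S20" "tf.subspace P" "tf.dim P = 2" using assms by (auto simp: G2S20_def)
  obtain x y where xy: "tf.independent {x, y}" "x \<noteq> y" "tf.span {x, y} = P"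
    by (rule tf.dim2_basis[OF P(2,3)])
  then have "x \<in> S20" "y \<in> S20" using P(1) tf.span_base by blast+
  then obtain q1 q2 where "x = s20 q1" "y = s20 q2" by (auto simp: S20_def)
  with xy have "is_basis2 P q1 q2" by (simp add: is_basis2_def)
  then have "plk q1 q2 \<noteq> 0" "P = plane_of q1 q2" by (simp_all add: is_basis2_iff)
  then show thesis by (rule that)
qed

lemma system_of_mem_FSI: "plk q1 q2 \<noteq> 0 \<Longrightarrow> system_of q1 q2 \<in> FSI"
proof -
  assume "plk q1 q2 \<noteq> 0"
  then have "\<forall>\<gamma> \<alpha> \<beta>. tsc \<gamma> gmet + tsc \<alpha> (kt_of (s20 q1)) + tsc \<beta> (kt_of (s20 q2)) = 0
      \<longrightarrow> \<gamma> = 0 \<and> \<alpha> = 0 \<and> \<beta> = 0"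
    by (simp add: plk_nonzero_iff gmet_kt_of_lincomb_eq_0_iff)
  then have "tf.independent {gmet, kt_of (s20 q1), kt_of (s20 q2)}"
    and "card {gmet, kt_of (s20 q1), kt_of (s20 q2)} = 3"
    unfolding tf.independent_triple_iff[symmetric] by simp_all
  then have "tf.dim (system_of q1 q2) = 3"
    by (simp add: system_of_def tf.dim_eq_card_independent)
  moreover have "system_of q1 q2 \<subseteq> KT"
  proof
    fix K assume "K \<in> system_of q1 q2"
    then obtain \<gamma> \<alpha> \<beta> where "K = tsc \<gamma> gmet + kt_of (s20 (s20_lincomb \<alpha> q1 \<beta> q2))"
      by (auto simp: system_of_eq)
    then show "K \<in> KT" unfolding mem_KT_iff by blast
  qed
  moreover have "gmet \<in> system_of q1 q2" by (simp add: system_of_def tf.span_base)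
  ultimately show ?thesis by (simp add: FSI_def system_of_def tf.subspace_span)
qed

lemma FSI_obtain_system_of:
  assumes "W \<in> FSI"
  obtains q1 q2 where "plk q1 q2 \<noteq> 0" "W = system_of q1 q2"
proof -
  have W: "W \<subseteq> KT" "tf.subspace W" "tf.dim W = 3" "gmet \<in> W" using assms by (auto simp: FSI_def)
  obtain w1 w2 where w: "tf.independent {gmet, w1, w2}" "gmet \<noteq> w1" "gmet \<noteq> w2" "w1 \<noteq> w2"
    and span: "tf.span {gmet, w1, w2} = W"
    by (rule tf.dim3_basis_extending[OF W(2-4) gmet_nonzero])
  have "w1 \<in> W" "w2 \<in> W" unfolding span[symmetric] by (simp_all add: tf.span_base)
  then have "w1 \<in> KT" "w2 \<in> KT" using W(1) by blast+
  then obtain t1 q1 t2 q2 where wq: "w1 = tsc t1 gmet + kt_of (s20 q1)" "w2 = tsc t2 gmet + kt_of (s20 q2)"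
    unfolding mem_KT_iff by blast
  have "W = system_of q1 q2" using span unfolding wq system_of_def tf.span_triple_shift by simp
  moreover have "plk q1 q2 \<noteq> 0"
    unfolding plk_nonzero_iff
  proof (intro allI impI)
    fix \<alpha> \<beta> assume "tsc \<alpha> (s20 q1) + tsc \<beta> (s20 q2) = 0"
    then have "tsc 0 gmet + tsc \<alpha> (kt_of (s20 q1)) + tsc \<beta> (kt_of (s20 q2)) = 0"
      by (simp only: gmet_kt_of_lincomb_eq_0_iff simp_thms)
    moreover have "tsc (- \<alpha> * t1 - \<beta> * t2) gmet + tsc \<alpha> w1 + tsc \<beta> w2 =
        tsc 0 gmet + tsc \<alpha> (kt_of (s20 q1)) + tsc \<beta> (kt_of (s20 q2))"
      unfolding wq by (simp add: fun_eq_iff algebra_simps)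
    ultimately have "tsc (- \<alpha> * t1 - \<beta> * t2) gmet + tsc \<alpha> w1 + tsc \<beta> w2 = 0" by simp
    moreover have "\<forall>a b c. tsc a gmet + tsc b w1 + tsc c w2 = 0 \<longrightarrow> a = 0 \<and> b = 0 \<and> c = 0"
      unfolding tf.independent_triple_iff[symmetric] using w by blast
    ultimately show "\<alpha> = 0 \<and> \<beta> = 0" by blast
  qed
  ultimately show thesis using that by blast
qed

lemma PW_system_of: "PW (system_of q1 q2) = plane_of q1 q2"
proof (intro set_eqI iffI)
  fix L assume "L \<in> PW (system_of q1 q2)"
  then obtain r where L: "L = s20 r" and "kt_of (s20 r) \<in> system_of q1 q2"
    by (auto simp: PW_def S20_def)
  then obtain \<gamma> \<alpha> \<beta> where "kt_of (s20 r) = tsc \<gamma> gmet + kt_of (s20 (s20_lincomb \<alpha> q1 \<beta> q2))"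
    by (auto simp: system_of_eq)
  then have "tsc 0 gmet + kt_of (s20 r) = tsc \<gamma> gmet + kt_of (s20 (s20_lincomb \<alpha> q1 \<beta> q2))"
    by simp
  then have "r = s20_lincomb \<alpha> q1 \<beta> q2" using gmet_plus_kt_of_s20_inj by blast
  then show "L \<in> plane_of q1 q2" using L by (auto simp: mem_plane_of_iff)
next
  fix L assume "L \<in> plane_of q1 q2"
  then obtain \<alpha> \<beta> where "L = s20 (s20_lincomb \<alpha> q1 \<beta> q2)" by (auto simp: plane_of_eq)
  then show "L \<in> PW (system_of q1 q2)"
    using kt_of_s20_lincomb_mem_system_of by (auto simp: PW_def S20_def)
qed

lemma system_of_eq_iff: "system_of q1 q2 = system_of r1 r2 \<longleftrightarrow> plane_of q1 q2 = plane_of r1 r2"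
proof
  assume "system_of q1 q2 = system_of r1 r2"
  then have "PW (system_of q1 q2) = PW (system_of r1 r2)" by simp
  then show "plane_of q1 q2 = plane_of r1 r2" by (simp add: PW_system_of)
next
  have sub: "system_of r1 r2 \<subseteq> system_of q1 q2" if "plane_of q1 q2 = plane_of r1 r2" for q1 q2 r1 r2
  proof -
    have "s20 r1 \<in> plane_of q1 q2" "s20 r2 \<in> plane_of q1 q2"
      unfolding that by (simp_all add: plane_of_def tf.span_base)
    then obtain \<alpha> \<beta> \<gamma> \<delta> where "r1 = s20_lincomb \<alpha> q1 \<beta> q2" "r2 = s20_lincomb \<gamma> q1 \<delta> q2"
      by (auto simp: mem_plane_of_iff)
    then have "{gmet, kt_of (s20 r1), kt_of (s20 r2)} \<subseteq> system_of q1 q2"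
      using kt_of_s20_lincomb_mem_system_of by (simp add: system_of_def tf.span_base)
    then show ?thesis unfolding system_of_def[of r1 r2]
      by (rule tf.span_minimal) (simp add: system_of_def tf.subspace_span)
  qed
  assume "plane_of q1 q2 = plane_of r1 r2"
  from sub[OF this[symmetric]] sub[OF this] show "system_of q1 q2 = system_of r1 r2"
    by (rule subset_antisym)
qed

lemma is_basis2_PW_iff:
  assumes "W \<in> FSI"
  shows "is_basis2 (PW W) q1 q2 \<longleftrightarrow> plk q1 q2 \<noteq> 0 \<and> W = system_of q1 q2"
proof -
  obtain r1 r2 where "W = system_of r1 r2" using assms by (rule FSI_obtain_system_of)
  then show ?thesis by (auto simp: is_basis2_iff PW_system_of system_of_eq_iff)
qed

text \<open>r1 and r2 satisfy the identity of minor2_expansion for their own minors; as these are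
  proportional to the minors of q1, q2, Cramer's rule puts r1 and r2 in the span of q1, q2.\<close>
lemma mem_plane_of_if_proportional:
  assumes "plk q1 q2 \<noteq> 0" "plk q1 q2 = (\<lambda>x. c * plk r1 r2 x)"
  shows "s20 r1 \<in> plane_of q1 q2" "s20 r2 \<in> plane_of q1 q2"
proof -
  let ?u = "s20_coords q1" and ?v = "s20_coords q2"
  let ?u' = "s20_coords r1" and ?v' = "s20_coords r2"
  obtain i j where ij: "i < 5" "j < 5" "minor2 ?u ?v i j \<noteq> 0"
    using assms(1) unfolding plk_eq_wedge by (rule minor2_nonzero_if_wedge_nonzero)
  have minors: "minor2 ?u ?v k l = c * minor2 ?u' ?v' k l" if "k < 5" "l < 5" for k l
    using minor2_if_wedge_proportional[OF assms(2)[unfolded plk_eq_wedge] that] .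
  have "s20 r \<in> plane_of q1 q2"
    if expansion: "\<And>k. s20_coords r k * minor2 ?u' ?v' i j - s20_coords r j * minor2 ?u' ?v' i k
       + s20_coords r i * minor2 ?u' ?v' j k = 0" for r
  proof -
    have "s20_coords r k * minor2 ?u ?v i j - s20_coords r j * minor2 ?u ?v i k
        + s20_coords r i * minor2 ?u ?v j k = 0" if "k \<in> {..<5}" for k
    proof -
      have "s20_coords r k * minor2 ?u ?v i j - s20_coords r j * minor2 ?u ?v i k
          + s20_coords r i * minor2 ?u ?v j k = c * (s20_coords r k * minor2 ?u' ?v' i j
          - s20_coords r j * minor2 ?u' ?v' i k + s20_coords r i * minor2 ?u' ?v' j k)"
        using that ij by (simp add: minors algebra_simps)
      then show ?thesis by (simp add: expansion)
    qed
    then obtain \<alpha> \<beta> where "\<forall>k\<in>{..<5}. s20_coords r k = \<alpha> * ?u k + \<beta> * ?v k"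
      using lincomb_if_minor2_expansion[OF ij(3)] by blast
    then have "s20_of_coords (s20_coords r) = s20_lincomb \<alpha> q1 \<beta> q2"
      unfolding s20_lincomb_def s20_of_coords_eq_iff by simp
    then show ?thesis by (auto simp: mem_plane_of_iff)
  qed
  then show "s20 r1 \<in> plane_of q1 q2" "s20 r2 \<in> plane_of q1 q2"
    by (simp_all add: minor2_expansion)
qed

lemma plane_of_eq_iff_proportional:
  assumes "plk q1 q2 \<noteq> 0" "plk r1 r2 \<noteq> 0"
  shows "plane_of q1 q2 = plane_of r1 r2 \<longleftrightarrow> proportional (plk q1 q2) (plk r1 r2)"
proof
  assume "plane_of q1 q2 = plane_of r1 r2"
  then have "s20 r1 \<in> plane_of q1 q2" "s20 r2 \<in> plane_of q1 q2"
    by (simp_all add: plane_of_def tf.span_base)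
  then obtain \<alpha> \<beta> \<gamma> \<delta> where "r1 = s20_lincomb \<alpha> q1 \<beta> q2" "r2 = s20_lincomb \<gamma> q1 \<delta> q2"
    by (auto simp: mem_plane_of_iff)
  then have r: "plk r1 r2 = (\<lambda>x. (\<alpha> * \<delta> - \<beta> * \<gamma>) * plk q1 q2 x)" by (simp add: plk_s20_lincomb)
  then have "\<alpha> * \<delta> - \<beta> * \<gamma> \<noteq> 0" using assms(2) by auto
  moreover from this have "plk q1 q2 = (\<lambda>x. inverse (\<alpha> * \<delta> - \<beta> * \<gamma>) * plk r1 r2 x)"
    by (simp add: r fun_eq_iff)
  ultimately show "proportional (plk q1 q2) (plk r1 r2)"
    unfolding proportional_def by (intro exI[of _ "inverse (\<alpha> * \<delta> - \<beta> * \<gamma>)"]) simp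
next
  assume "proportional (plk q1 q2) (plk r1 r2)"
  then obtain c where "c \<noteq> 0" and q: "plk q1 q2 = (\<lambda>x. c * plk r1 r2 x)"
    by (auto simp: proportional_def)
  then have r: "plk r1 r2 = (\<lambda>x. inverse c * plk q1 q2 x)" by (simp add: fun_eq_iff)
  show "plane_of q1 q2 = plane_of r1 r2"
    unfolding plane_of_def tf.span_eq
    using mem_plane_of_if_proportional[OF assms(1) q] mem_plane_of_if_proportional[OF assms(2) r]
    by (simp add: plane_of_def)
qed

definition skew_coord :: "nat \<Rightarrow> nat \<Rightarrow> pidx" where
  "skew_coord k l = (if k = 0 then (if l = 1 then a30 else if l = 2 then a20 else if l = 3 then a10 else a00)
     else if k = 1 then (if l = 2 then a21 else if l = 3 then a11 else a01)
     else if k = 2 then (if l = 3 then a12 else a02) else a03)"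

definition skew_entry :: "(pidx \<Rightarrow> complex) \<Rightarrow> nat \<Rightarrow> nat \<Rightarrow> complex" where
  "skew_entry a k l = (if k = l then 0 else if k < l then a (skew_coord k l) else - a (skew_coord l k))"

lemma skew_entry_swap: "skew_entry a l k = - skew_entry a k l"
  by (simp add: skew_entry_def)

lemma skew_entry_diag [simp]: "skew_entry a k k = 0"
  by (simp add: skew_entry_def)

lemma skew_entry_skew_pos [simp]: "skew_entry a (fst (skew_pos x)) (snd (skew_pos x)) = a x"
  by (cases x) (simp_all add: skew_entry_def skew_pos_def skew_coord_def)

text \<open>Each instance is either trivial or, up to sign, one of the five Pluecker relations.\<close>
lemma skew_entry_plucker_identity:
  assumes "a \<in> plucker_var"
  shows "skew_entry a (fst (skew_pos x)) (snd (skew_pos x)) * skew_entry a (fst (skew_pos y)) (snd (skew_pos y))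
     = skew_entry a (fst (skew_pos y)) (fst (skew_pos x)) * skew_entry a (snd (skew_pos y)) (snd (skew_pos x))
     - skew_entry a (fst (skew_pos y)) (snd (skew_pos x)) * skew_entry a (snd (skew_pos y)) (fst (skew_pos x))"
proof -
  have R: "a a03 * a a21 - a a02 * a a11 + a a01 * a a12 = 0"
     "a a03 * a a20 - a a02 * a a10 + a a00 * a a12 = 0"
     "a a03 * a a30 - a a01 * a a10 + a a00 * a a11 = 0"
     "a a02 * a a30 - a a01 * a a20 + a a00 * a a21 = 0"
     "a a12 * a a30 - a a11 * a a20 + a a10 * a a21 = 0"
    using assms unfolding plucker_var_def by auto
  show ?thesis
    by (induct x; induct y; simp add: skew_pos_def skew_entry_def skew_coord_def; insert R; algebra)
qed

text \<open>The condition says that row k of the skew matrix S = skew_entry a is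
  (S_ik / S_ij) row j - (S_jk / S_ij) row i.\<close>
definition rows_spanned_by_pivot :: "(pidx \<Rightarrow> complex) \<Rightarrow> nat \<Rightarrow> nat \<Rightarrow> bool" where
  "rows_spanned_by_pivot a i j \<longleftrightarrow> i < 5 \<and> j < 5 \<and> skew_entry a i j \<noteq> 0 \<and>
     (\<forall>k<5. \<forall>l<5. skew_entry a k l * skew_entry a i j
        = skew_entry a i k * skew_entry a j l - skew_entry a i l * skew_entry a j k)"

lemma plucker_var_obtain_pivot:
  assumes "a \<in> plucker_var"
  obtains i j where "rows_spanned_by_pivot a i j"
proof -
  obtain y where "a y \<noteq> 0" using assms by (auto simp: plucker_var_def fun_eq_iff)
  define i j where "i = fst (skew_pos y)" and "j = snd (skew_pos y)"
  have "skew_entry a k l * skew_entry a i j = skew_entry a i k * skew_entry a j l - skew_entry a i l * skew_entry a j k"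
    if "k < 5" "l < 5" for k l
    using that
  proof (rule index_pair_cases[rotated 3])
    show "skew_entry a (fst (skew_pos x)) (snd (skew_pos x)) * skew_entry a i j
        = skew_entry a i (fst (skew_pos x)) * skew_entry a j (snd (skew_pos x))
        - skew_entry a i (snd (skew_pos x)) * skew_entry a j (fst (skew_pos x))" for x
      using skew_entry_plucker_identity[OF assms, of x y] by (simp add: i_def j_def)
    show "skew_entry a l k * skew_entry a i j = skew_entry a i l * skew_entry a j k - skew_entry a i k * skew_entry a j l"
      if "skew_entry a k l * skew_entry a i j = skew_entry a i k * skew_entry a j l - skew_entry a i l * skew_entry a j k"
      for k l
      using that skew_entry_swap[where k = k and l = l] by (simp add: algebra_simps)
  qed simp
  moreover have "i < 5" "j < 5" "skew_entry a i j \<noteq> 0"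
    using skew_pos_less \<open>a y \<noteq> 0\<close> by (simp_all add: i_def j_def)
  ultimately have "rows_spanned_by_pivot a i j" unfolding rows_spanned_by_pivot_def by blast
  then show thesis by (rule that)
qed

lemma wedge_of_pivot:
  assumes "rows_spanned_by_pivot a i j"
  shows "a = wedge (\<lambda>k. skew_entry a i k / skew_entry a i j) (skew_entry a j)"
proof
  fix x
  have "\<forall>k<5. \<forall>l<5. skew_entry a k l * skew_entry a i j
      = skew_entry a i k * skew_entry a j l - skew_entry a i l * skew_entry a j k"
    using assms by (simp add: rows_spanned_by_pivot_def)
  from this[rule_format, OF skew_pos_less(1)[of x] skew_pos_less(2)[of x]]
  have "a x * skew_entry a i j = skew_entry a i (fst (skew_pos x)) * skew_entry a j (snd (skew_pos x))
      - skew_entry a i (snd (skew_pos x)) * skew_entry a j (fst (skew_pos x))"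
    by simp
  then show "a x = wedge (\<lambda>k. skew_entry a i k / skew_entry a i j) (skew_entry a j) x"
    using assms by (simp add: rows_spanned_by_pivot_def wedge_def minor2_def field_simps)
qed

lemma wedge_mem_plucker_var:
  assumes "wedge u v \<noteq> 0"
  shows "wedge u v \<in> plucker_var"
proof -
  let ?a = "wedge u v"
  have "?a a03 * ?a a21 - ?a a02 * ?a a11 + ?a a01 * ?a a12 = 0
     \<and> ?a a03 * ?a a20 - ?a a02 * ?a a10 + ?a a00 * ?a a12 = 0
     \<and> ?a a03 * ?a a30 - ?a a01 * ?a a10 + ?a a00 * ?a a11 = 0
     \<and> ?a a02 * ?a a30 - ?a a01 * ?a a20 + ?a a00 * ?a a21 = 0
     \<and> ?a a12 * ?a a30 - ?a a11 * ?a a20 + ?a a10 * ?a a21 = 0"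
    by (simp add: wedge_def skew_pos_def minor2_def) (intro conjI; algebra)
  with assms show ?thesis by (simp add: plucker_var_def)
qed

definition e5 :: "nat \<Rightarrow> 5" where
  "e5 k = Abs_bit1 (int k)"

lemma ix5_less: "ix5 r < 5"
  unfolding ix5_def using Rep_bit1[of r] by auto

lemma ix5_e5: "k < 5 \<Longrightarrow> ix5 (e5 k) = k"
  unfolding ix5_def e5_def by (simp add: Abs_bit1_inverse)

lemma e5_ix5: "e5 (ix5 r) = r"
  unfolding ix5_def e5_def using Rep_bit1[of r] by (simp add: Rep_bit1_inverse)

lemma skewmat_nth: "skewmat a $ r $ c = skew_entry a (ix5 r) (ix5 c)"
proof -
  have "ix5 r \<in> {0, 1, 2, 3, 4}" "ix5 c \<in> {0, 1, 2, 3, 4}" using ix5_less[of r] ix5_less[of c] by auto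
  then show ?thesis by (auto simp: skewmat_def skew_entry_def skew_coord_def)
qed

definition skew_row :: "(pidx \<Rightarrow> complex) \<Rightarrow> nat \<Rightarrow> complex ^ 5" where
  "skew_row a k = row (e5 k) (skewmat a)"

lemma skew_row_nth: "k < 5 \<Longrightarrow> skew_row a k $ c = skew_entry a k (ix5 c)"
  by (simp add: skew_row_def row_def skewmat_nth ix5_e5)

lemma rows_skewmat: "rows (skewmat a) = skew_row a ` {..<5}"
  unfolding rows_def skew_row_def using ix5_less e5_ix5 by (auto intro!: image_eqI[of _ _ "ix5 _"])

lemma skew_rows_independent:
  assumes "i < 5" "j < 5" "skew_entry a i j \<noteq> 0"
  shows "vec.independent {skew_row a i, skew_row a j} \<and> skew_row a i \<noteq> skew_row a j"
  unfolding vec.independent_pair_iff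
proof (intro allI impI)
  fix \<alpha> \<beta> assume "\<alpha> *s skew_row a i + \<beta> *s skew_row a j = 0"
  then have "(\<alpha> *s skew_row a i + \<beta> *s skew_row a j) $ e5 j = 0"
    "(\<alpha> *s skew_row a i + \<beta> *s skew_row a j) $ e5 i = 0" by simp_all
  then show "\<alpha> = 0 \<and> \<beta> = 0"
    using assms skew_entry_swap[where k = i and l = j] by (simp add: skew_row_nth ix5_e5)
qed

lemma rank_skewmat_if_pivot:
  assumes "rows_spanned_by_pivot a i j"
  shows "rank (skewmat a) = 2"
proof -
  have ij: "i < 5" "j < 5" "skew_entry a i j \<noteq> 0" using assms by (simp_all add: rows_spanned_by_pivot_def)
  have "rows (skewmat a) \<subseteq> vec.span {skew_row a i, skew_row a j}"
  proof
    fix z assume "z \<in> rows (skewmat a)"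
    then obtain k where k: "k < 5" "z = skew_row a k" by (auto simp: rows_skewmat)
    have "skew_row a k = (- skew_entry a j k / skew_entry a i j) *s skew_row a i
        + (skew_entry a i k / skew_entry a i j) *s skew_row a j"
      unfolding vec_eq_iff
    proof
      fix c
      have "skew_entry a k (ix5 c) * skew_entry a i j
          = skew_entry a i k * skew_entry a j (ix5 c) - skew_entry a i (ix5 c) * skew_entry a j k"
        using assms k(1) ix5_less[of c] by (simp add: rows_spanned_by_pivot_def)
      then show "skew_row a k $ c = ((- skew_entry a j k / skew_entry a i j) *s skew_row a i
          + (skew_entry a i k / skew_entry a i j) *s skew_row a j) $ c"
        using ij k(1) by (simp add: skew_row_nth field_simps)
    qed
    then show "z \<in> vec.span {skew_row a i, skew_row a j}" unfolding k(2) vec.span_pair by blast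
  qed
  then have "vec.dim (rows (skewmat a)) \<le> card {skew_row a i, skew_row a j}"
    by (simp add: vec.dim_le_card)
  moreover have "card {skew_row a i, skew_row a j} \<le> vec.dim (rows (skewmat a))"
    using skew_rows_independent[OF ij] ij(1,2)
    by (intro vec.independent_card_le_dim) (auto simp: rows_skewmat)
  moreover have "card {skew_row a i, skew_row a j} = 2" using skew_rows_independent[OF ij] by simp
  ultimately show ?thesis by (simp add: row_rank_def_gen)
qed

lemma pivot_if_rank_skewmat:
  assumes "rank (skewmat a) = 2" "i < 5" "j < 5" "skew_entry a i j \<noteq> 0"
  shows "rows_spanned_by_pivot a i j"
proof -
  have indep: "vec.independent {skew_row a i, skew_row a j}" "skew_row a i \<noteq> skew_row a j"
    using skew_rows_independent[OF assms(2-4)] by simp_all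
  have "rows (skewmat a) \<subseteq> vec.span {skew_row a i, skew_row a j}"
    using vec.card_eq_dim[of "{skew_row a i, skew_row a j}" "rows (skewmat a)"] indep assms
    by (simp add: rows_skewmat row_rank_def_gen)
  have "skew_entry a k l * skew_entry a i j
      = skew_entry a i k * skew_entry a j l - skew_entry a i l * skew_entry a j k" if "k < 5" "l < 5" for k l
  proof -
    have "skew_row a k \<in> vec.span {skew_row a i, skew_row a j}"
      using \<open>rows (skewmat a) \<subseteq> _\<close> that by (auto simp: rows_skewmat)
    then obtain \<alpha> \<beta> where comb: "skew_row a k = \<alpha> *s skew_row a i + \<beta> *s skew_row a j"
      by (auto simp: vec.span_pair)
    have row_k: "skew_entry a k n = \<alpha> * skew_entry a i n + \<beta> * skew_entry a j n" if "n < 5" for n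
      using arg_cong[OF comb, of "\<lambda>z. z $ e5 n"] that \<open>k < 5\<close> assms(2,3)
      by (simp add: skew_row_nth ix5_e5)
    have "skew_entry a k j = \<alpha> * skew_entry a i j" "skew_entry a k i = \<beta> * skew_entry a j i"
      using row_k[OF assms(3)] row_k[OF assms(2)] by simp_all
    then show ?thesis
      using row_k[OF \<open>l < 5\<close>] skew_entry_swap[of a k j] skew_entry_swap[of a k i]
        skew_entry_swap[of a j i]
      by algebra
  qed
  then show ?thesis using assms by (simp add: rows_spanned_by_pivot_def)
qed

lemma plucker_var_eq_rank_2: "plucker_var = {a. a \<noteq> 0 \<and> rank (skewmat a) = 2}"
proof (intro set_eqI iffI; clarify)
  fix a assume "a \<in> plucker_var"
  then obtain i j where "rows_spanned_by_pivot a i j" by (rule plucker_var_obtain_pivot)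
  then show "a \<noteq> 0 \<and> rank (skewmat a) = 2" using \<open>a \<in> plucker_var\<close>
    by (simp add: rank_skewmat_if_pivot plucker_var_def)
next
  fix a assume "a \<noteq> 0" "rank (skewmat a) = 2"
  then obtain y where "a y \<noteq> 0" by (auto simp: fun_eq_iff)
  then have "rows_spanned_by_pivot a (fst (skew_pos y)) (snd (skew_pos y))"
    using \<open>rank (skewmat a) = 2\<close> by (intro pivot_if_rank_skewmat) (simp_all add: skew_pos_less)
  then show "a \<in> plucker_var" using \<open>a \<noteq> 0\<close> by (metis wedge_of_pivot wedge_mem_plucker_var)
qed

lemma bij_betw_PW: "bij_betw PW FSI G2S20"
proof (rule bij_betw_imageI)
  show "inj_on PW FSI"
  proof (rule inj_onI)
    fix W1 W2 assume "W1 \<in> FSI" "W2 \<in> FSI" "PW W1 = PW W2"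
    moreover obtain q1 q2 where "W1 = system_of q1 q2" using \<open>W1 \<in> FSI\<close> by (rule FSI_obtain_system_of)
    moreover obtain r1 r2 where "W2 = system_of r1 r2" using \<open>W2 \<in> FSI\<close> by (rule FSI_obtain_system_of)
    ultimately show "W1 = W2" by (simp add: PW_system_of system_of_eq_iff)
  qed
  show "PW ` FSI = G2S20"
  proof (intro equalityI subsetI)
    fix P assume "P \<in> PW ` FSI"
    then obtain W where "W \<in> FSI" "P = PW W" by blast
    moreover obtain q1 q2 where "plk q1 q2 \<noteq> 0" "W = system_of q1 q2"
      using \<open>W \<in> FSI\<close> by (rule FSI_obtain_system_of)
    ultimately show "P \<in> G2S20" by (simp add: PW_system_of plane_of_mem_G2S20)
  next
    fix P assume "P \<in> G2S20"
    then obtain q1 q2 where "plk q1 q2 \<noteq> 0" "P = plane_of q1 q2" by (rule G2S20_obtain_plane_of)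
    then show "P \<in> PW ` FSI" using system_of_mem_FSI PW_system_of by (metis image_eqI)
  qed
qed

lemma plucker_var_obtain_basis:
  assumes "a \<in> plucker_var"
  shows "\<exists>W\<in>FSI. \<exists>q1 q2. is_basis2 (PW W) q1 q2 \<and> proportional a (plk q1 q2)"
proof -
  obtain i j where "rows_spanned_by_pivot a i j" using assms by (rule plucker_var_obtain_pivot)
  from wedge_of_pivot[OF this] obtain u v where "a = wedge u v" by blast
  then have plk: "plk (s20_of_coords u) (s20_of_coords v) = a" by (simp add: plk_s20_of_coords)
  moreover have "a \<noteq> 0" using assms by (simp add: plucker_var_def)
  moreover have "proportional a a" unfolding proportional_def by (intro exI[of _ 1]) simp
  ultimately show ?thesis
    by (metis system_of_mem_FSI is_basis2_iff PW_system_of)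
qed

theorem proposition2p8:
  shows "bij_betw PW FSI G2S20 \<and>
    (\<forall>W\<in>FSI. \<exists>q1 q2. is_basis2 (PW W) q1 q2) \<and>
    (\<forall>W\<in>FSI. \<forall>q1 q2. is_basis2 (PW W) q1 q2 \<longrightarrow> plk q1 q2 \<in> plucker_var) \<and>
    (\<forall>W\<in>FSI. \<forall>q1 q2 r1 r2. is_basis2 (PW W) q1 q2 \<longrightarrow> is_basis2 (PW W) r1 r2
       \<longrightarrow> proportional (plk q1 q2) (plk r1 r2)) \<and>
    (\<forall>W1\<in>FSI. \<forall>W2\<in>FSI. \<forall>q1 q2 r1 r2. is_basis2 (PW W1) q1 q2 \<longrightarrow> is_basis2 (PW W2) r1 r2
       \<longrightarrow> proportional (plk q1 q2) (plk r1 r2) \<longrightarrow> W1 = W2) \<and>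
    (\<forall>a\<in>plucker_var. \<exists>W\<in>FSI. \<exists>q1 q2. is_basis2 (PW W) q1 q2 \<and> proportional a (plk q1 q2)) \<and>
    plucker_var = {a. a \<noteq> 0 \<and> rank (skewmat a) = 2}"
proof (intro conjI ballI allI impI)
  fix W assume "W \<in> FSI"
  then obtain q1 q2 where "plk q1 q2 \<noteq> 0" "W = system_of q1 q2" by (rule FSI_obtain_system_of)
  with \<open>W \<in> FSI\<close> have "is_basis2 (PW W) q1 q2" by (simp add: is_basis2_PW_iff)
  then show "\<exists>q1 q2. is_basis2 (PW W) q1 q2" by blast
next
  fix W q1 q2 assume "is_basis2 (PW W) q1 q2"
  then show "plk q1 q2 \<in> plucker_var" by (simp add: is_basis2_iff plk_eq_wedge wedge_mem_plucker_var)
next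
  fix W q1 q2 r1 r2 assume "is_basis2 (PW W) q1 q2" "is_basis2 (PW W) r1 r2"
  then show "proportional (plk q1 q2) (plk r1 r2)" by (auto simp: is_basis2_iff plane_of_eq_iff_proportional)
next
  fix W1 W2 q1 q2 r1 r2 assume "W1 \<in> FSI" "W2 \<in> FSI" "is_basis2 (PW W1) q1 q2" "is_basis2 (PW W2) r1 r2"
    and "proportional (plk q1 q2) (plk r1 r2)"
  then show "W1 = W2" by (auto simp: is_basis2_PW_iff system_of_eq_iff plane_of_eq_iff_proportional)
qed (rule bij_betw_PW, erule plucker_var_obtain_basis, rule plucker_var_eq_rank_2)

end
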